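(* Let $X$ be a metric space, let $A\subseteq X$ be nonempty and let $Y$ be a complete $\mathbb{R}$-tree. Then the multivalued mapping $\Phi:\mathcal{N}(A,Y)\to\mathcal{P}(\mathcal{N}(X,Y))$, assigning to each $f\in\mathcal{N}(A,Y)$ the set of all $f'\in\mathcal{N}(X,Y)$ with $f'|_A=f$, admits a nonexpansive selection, i.e. there is a map $\alpha:\mathcal{N}(A,Y)\to\mathcal{N}(X,Y)$ with $\alpha(f)\in\Phi(f)$ for all $f$ and $d_\infty(\alpha(f),\alpha(g))\le d_\infty(f,g)$.
   Context: An $\mathbb{R}$-tree is a uniquely geodesic metric space such that whenever two geodesic segments intersect only in a common endpoint, their union is a geodesic segment. $\mathcal{N}(A,Y)$ is the set of bounded nonexpansive maps $A\to Y$ with the supremum metric $d_\infty$. *)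

theory Defs
  imports "HOL-Analysis.Analysis"
begin

definition geodesic_segment :: "'b set \<Rightarrow> ('b \<Rightarrow> 'b \<Rightarrow> real) \<Rightarrow> 'b \<Rightarrow> 'b \<Rightarrow> 'b set \<Rightarrow> bool" where
  "geodesic_segment M d x y S \<longleftrightarrow>
     (\<exists>\<gamma>. \<gamma> \<in> {0..d x y} \<rightarrow> M \<and> \<gamma> 0 = x \<and> \<gamma> (d x y) = y \<and>
          (\<forall>s\<in>{0..d x y}. \<forall>t\<in>{0..d x y}. d (\<gamma> s) (\<gamma> t) = \<bar>s - t\<bar>) \<and>
          S = \<gamma> ` {0..d x y})"

definition uniquely_geodesic :: "'b set \<Rightarrow> ('b \<Rightarrow> 'b \<Rightarrow> real) \<Rightarrow> bool" where
  "uniquely_geodesic M d \<longleftrightarrow> (\<forall>x\<in>M. \<forall>y\<in>M. \<exists>!S. geodesic_segment M d x y S)"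

definition R_tree :: "'b set \<Rightarrow> ('b \<Rightarrow> 'b \<Rightarrow> real) \<Rightarrow> bool" where
  "R_tree M d \<longleftrightarrow> Metric_space M d \<and> uniquely_geodesic M d \<and>
     (\<forall>x y z S T. geodesic_segment M d x y S \<and> geodesic_segment M d y z T \<and> S \<inter> T = {y}
        \<longrightarrow> geodesic_segment M d x z (S \<union> T))"

text \<open>\<N>(A,Y): bounded nonexpansive maps A \<rightarrow> Y, represented as extensional functions
(value undefined outside A).\<close>
definition bnonexp :: "'a set \<Rightarrow> ('a \<Rightarrow> 'a \<Rightarrow> real) \<Rightarrow> 'b set \<Rightarrow> ('b \<Rightarrow> 'b \<Rightarrow> real) \<Rightarrow> ('a \<Rightarrow> 'b) set" where
  "bnonexp A dX MY dY = {f. f \<in> A \<rightarrow>\<^sub>E MY \<and>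
       (\<forall>x\<in>A. \<forall>y\<in>A. dY (f x) (f y) \<le> dX x y) \<and> Metric_space.mbounded MY dY (f ` A)}"

definition dsup :: "'a set \<Rightarrow> ('b \<Rightarrow> 'b \<Rightarrow> real) \<Rightarrow> ('a \<Rightarrow> 'b) \<Rightarrow> ('a \<Rightarrow> 'b) \<Rightarrow> real" where
  "dsup A dY f g = (SUP x\<in>A. dY (f x) (g x))"

end

theory Submission
  imports Defs
begin

text \<open>A complete \<open>\<real>\<close>-tree \<open>Y\<close> is hyperconvex: closed balls that pairwise intersect have a
  common point. Hence for \<open>f \<in> \<N>(A,Y)\<close> and \<open>x \<in> X\<close> the set \<open>E(f,x)\<close> of admissible values
  \<open>y\<close>, those with \<open>d(y, f a) \<le> d(x, a)\<close> for all \<open>a \<in> A\<close>, is nonempty; it is geodesically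
  convex, and by hyperconvexity again \<open>E(g,x')\<close> lies within Hausdorff distance
  \<open>d(x,x') + d\<^sub>\<infinity>(f,g)\<close> of \<open>E(f,x)\<close>. Define \<open>\<alpha>(f)(x)\<close> as the point of \<open>E(f,x)\<close> nearest to a fixed
  base point. In an \<open>\<real>\<close>-tree the nearest-point map onto convex sets is 1-Lipschitz for the
  Hausdorff distance, which gives both \<open>\<alpha>(f) \<in> \<N>(X,Y)\<close> and \<open>d\<^sub>\<infinity>(\<alpha> f, \<alpha> g) \<le> d\<^sub>\<infinity>(f,g)\<close>.\<close>

lemma (in Metric_space) mcomplete_chain_limit:
  assumes "mcomplete" "I \<noteq> {}" "x ` I \<subseteq> M" "bdd_above (s ` I)"
    and chain: "\<And>i j. i \<in> I \<Longrightarrow> j \<in> I \<Longrightarrow> d (x i) (x j) \<le> \<bar>s i - s j\<bar>"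
  obtains p where "p \<in> M" "\<And>i. i \<in> I \<Longrightarrow> d p (x i) \<le> Sup (s ` I) - s i"
proof -
  define \<sigma> where "\<sigma> = Sup (s ` I)"
  have below: "s i \<le> \<sigma>" if "i \<in> I" for i
    unfolding \<sigma>_def using cSup_upper[OF imageI[OF that] assms(4)] .
  have gap: "\<bar>s i - s j\<bar> \<le> (\<sigma> - s i) + (\<sigma> - s j)" if "i \<in> I" "j \<in> I" for i j
    using below[OF that(1)] below[OF that(2)] unfolding abs_le_iff by linarith
  have approx: "\<forall>n. \<exists>i. i \<in> I \<and> \<sigma> - s i < inverse (real (Suc n))"
  proof
    fix n
    have "\<exists>i\<in>I. \<sigma> - inverse (real (Suc n)) < s i"
      using less_cSup_iff[of "s ` I" "\<sigma> - inverse (real (Suc n))"] assms(2,4)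
      unfolding \<sigma>_def by simp
    then show "\<exists>i. i \<in> I \<and> \<sigma> - s i < inverse (real (Suc n))"
      by auto
  qed
  obtain k where k: "\<And>n. k n \<in> I" "\<And>n. \<sigma> - s (k n) < inverse (real (Suc n))"
    using choice[OF approx] by blast
  have close: "\<sigma> - s (k n) < e" if "inverse (real (Suc N)) < e" "N \<le> n" for e N n
  proof -
    have "inverse (real (Suc n)) \<le> inverse (real (Suc N))"
      using that(2) by (simp add: le_imp_inverse_le)
    then show ?thesis
      using k(2)[of n] that(1) by linarith
  qed
  have "MCauchy (x \<circ> k)"
    unfolding MCauchy_def
  proof (intro conjI allI impI)
    show "range (x \<circ> k) \<subseteq> M"
      using k(1) assms(3) by auto
    fix e :: real assume "0 < e"
    then obtain N where N: "inverse (real (Suc N)) < e / 2"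
      using reals_Archimedean half_gt_zero by blast
    have "d (x (k n)) (x (k n')) < e" if "N \<le> n" "N \<le> n'" for n n'
      using chain[OF k(1) k(1), of n n'] gap[OF k(1) k(1), of n n'] close[OF N that(1)]
        close[OF N that(2)] by linarith
    then show "\<exists>N. \<forall>n n'. N \<le> n \<longrightarrow> N \<le> n' \<longrightarrow> d ((x \<circ> k) n) ((x \<circ> k) n') < e"
      by auto
  qed
  then obtain p where "limitin mtopology (x \<circ> k) p sequentially"
    using assms(1) unfolding mcomplete_def by blast
  then have p: "p \<in> M" "\<And>e. 0 < e \<Longrightarrow> \<exists>N. \<forall>n\<ge>N. d (x (k n)) p < e"
    unfolding limit_metric_sequentially by (auto simp: o_def) meson
  have "d p (x i) \<le> \<sigma> - s i" if i: "i \<in> I" for i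
  proof (rule field_le_epsilon)
    fix e :: real assume "0 < e"
    then obtain N1 where N1: "\<forall>n\<ge>N1. d (x (k n)) p < e / 2"
      using p(2)[of "e / 2"] by auto
    obtain N2 where N2: "inverse (real (Suc N2)) < e / 2"
      using reals_Archimedean \<open>0 < e\<close> half_gt_zero by blast
    define n where "n = max N1 N2"
    have "d p (x i) \<le> d p (x (k n)) + d (x (k n)) (x i)"
      using triangle p(1) k(1) i assms(3) by blast
    moreover have "d p (x (k n)) < e / 2"
      using N1 commute n_def by auto
    moreover have "\<sigma> - s (k n) < e / 2"
      using close[OF N2] n_def by auto
    ultimately show "d p (x i) \<le> \<sigma> - s i + e"
      using chain[OF k(1) i, of n] gap[OF k(1) i, of n] by linarith
  qed
  then show ?thesis
    using that p(1) unfolding \<sigma>_def by blast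
qed

locale R_tree_space = Metric_space M d for M d +
  assumes R_tree: "R_tree M d"
begin

definition geodesic :: "(real \<Rightarrow> 'a) \<Rightarrow> 'a \<Rightarrow> 'a \<Rightarrow> bool" where
  "geodesic \<gamma> x y \<longleftrightarrow> \<gamma> \<in> {0..d x y} \<rightarrow> M \<and> \<gamma> 0 = x \<and> \<gamma> (d x y) = y \<and>
     (\<forall>s\<in>{0..d x y}. \<forall>t\<in>{0..d x y}. d (\<gamma> s) (\<gamma> t) = \<bar>s - t\<bar>)"

lemma geodesic_segment_iff:
  "geodesic_segment M d x y S \<longleftrightarrow> (\<exists>\<gamma>. geodesic \<gamma> x y \<and> S = \<gamma> ` {0..d x y})"
  unfolding geodesic_segment_def geodesic_def by blast

text \<open>In an \<open>\<real>\<close>-tree the geodesic segment \<open>[x,y]\<close> is the metric interval \<open>seg x y\<close>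
  (\<open>geodesic_segment_seg\<close>); the geometry below is phrased in terms of it.\<close>

definition seg :: "'a \<Rightarrow> 'a \<Rightarrow> 'a set" where
  "seg x y = {p\<in>M. d x p + d p y = d x y}"

lemma seg_commute: "seg x y = seg y x"
  unfolding seg_def using commute by auto

lemma seg_subset: "p \<in> seg x y \<Longrightarrow> p \<in> M"
  unfolding seg_def by auto

lemma endpoints_in_seg: "x \<in> M \<Longrightarrow> y \<in> M \<Longrightarrow> x \<in> seg x y \<and> y \<in> seg x y"
  unfolding seg_def by auto

lemma seg_dist_le:
  assumes "p \<in> seg x y"
  shows "d x p \<le> d x y" "d p y \<le> d x y"
proof -
  have "d x p + d p y = d x y"
    using assms unfolding seg_def by auto
  then show "d x p \<le> d x y" "d p y \<le> d x y"
    using nonneg[of x p] nonneg[of p y] by linarith+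
qed

lemma geodesic_exists:
  assumes "x \<in> M" "y \<in> M"
  obtains \<gamma> where "geodesic \<gamma> x y"
  using R_tree assms geodesic_segment_iff
  unfolding R_tree_def uniquely_geodesic_def by metis

lemma geodesic_dist:
  assumes "geodesic \<gamma> x y" "0 \<le> t" "t \<le> d x y"
  shows "d x (\<gamma> t) = t" "d (\<gamma> t) y = d x y - t" "\<gamma> t \<in> M"
proof -
  have ends: "\<gamma> 0 = x" "\<gamma> (d x y) = y"
    and iso: "\<forall>s\<in>{0..d x y}. \<forall>t\<in>{0..d x y}. d (\<gamma> s) (\<gamma> t) = \<bar>s - t\<bar>"
    using assms(1) unfolding geodesic_def by auto
  have "d (\<gamma> 0) (\<gamma> t) = \<bar>0 - t\<bar>" "d (\<gamma> t) (\<gamma> (d x y)) = \<bar>t - d x y\<bar>"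
    using iso assms(2,3) by auto
  then show "d x (\<gamma> t) = t" "d (\<gamma> t) y = d x y - t"
    using ends assms(2,3) by auto
  show "\<gamma> t \<in> M"
    using assms unfolding geodesic_def by auto
qed

lemma geodesic_in_seg: "geodesic \<gamma> x y \<Longrightarrow> 0 \<le> t \<Longrightarrow> t \<le> d x y \<Longrightarrow> \<gamma> t \<in> seg x y"
  using geodesic_dist unfolding seg_def by auto

lemma geodesic_endpoints: "geodesic \<gamma> x y \<Longrightarrow> x \<in> M \<and> y \<in> M"
  unfolding geodesic_def by (metis Pi_iff atLeastAtMost_iff nonneg order_refl)

lemma geodesic_append:
  assumes g1: "geodesic \<gamma>1 a p" and g2: "geodesic \<gamma>2 p b" and s: "d a p + d p b = d a b"
  shows "geodesic (\<lambda>t. if t \<le> d a p then \<gamma>1 t else \<gamma>2 (t - d a p)) a b"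
    (is "geodesic ?\<gamma> a b")
proof -
  have M: "a \<in> M" "p \<in> M" "b \<in> M"
    using geodesic_endpoints g1 g2 by auto
  have cross: "d (\<gamma>1 s) (\<gamma>2 (t - d a p)) = t - s"
    if "0 \<le> s" "s \<le> d a p" "d a p < t" "t \<le> d a b" for s t
  proof -
    have e1: "d a (\<gamma>1 s) = s" "d (\<gamma>1 s) p = d a p - s" "\<gamma>1 s \<in> M"
      using geodesic_dist[OF g1] that by auto
    have e2: "d p (\<gamma>2 (t - d a p)) = t - d a p" "d (\<gamma>2 (t - d a p)) b = d a b - t"
      "\<gamma>2 (t - d a p) \<in> M"
      using geodesic_dist[OF g2, of "t - d a p"] that s by auto
    show ?thesis
      using triangle[OF e1(3) M(2) e2(3)] triangle[OF M(1) e1(3) e2(3)]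
        triangle[OF M(1) e2(3) M(3)] e1 e2 by linarith
  qed
  have end_b: "?\<gamma> (d a b) = b"
  proof (cases "d a b \<le> d a p")
    case True
    then have "d p b = 0" using s nonneg[of p b] by linarith
    then have "p = b" using M by simp
    then show ?thesis using True g1 s unfolding geodesic_def by auto
  next
    case False
    moreover have "\<gamma>2 (d p b) = b"
      using g2 unfolding geodesic_def by auto
    moreover have "d a b - d a p = d p b"
      using s by simp
    ultimately show ?thesis using False by simp
  qed
  show ?thesis
    unfolding geodesic_def
  proof (intro conjI ballI)
    show "?\<gamma> \<in> {0..d a b} \<rightarrow> M"
      using geodesic_dist(3)[OF g1] geodesic_dist(3)[OF g2] s by auto
    show "?\<gamma> 0 = a" "?\<gamma> (d a b) = b"
      using g1 end_b unfolding geodesic_def by auto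
    fix s t assume st: "s \<in> {0..d a b}" "t \<in> {0..d a b}"
    show "d (?\<gamma> s) (?\<gamma> t) = \<bar>s - t\<bar>"
      using cross[of s t] cross[of t s] st s commute g1 g2 unfolding geodesic_def
      by (auto simp: abs_if)
  qed
qed

lemma geodesic_through:
  assumes "a \<in> M" "b \<in> M" "p \<in> seg a b"
  obtains \<gamma> where "geodesic \<gamma> a b" "\<gamma> (d a p) = p"
proof -
  have "p \<in> M" and s: "d a p + d p b = d a b"
    using assms unfolding seg_def by auto
  then obtain \<gamma>1 \<gamma>2 where g1: "geodesic \<gamma>1 a p" and g2: "geodesic \<gamma>2 p b"
    using geodesic_exists assms by metis
  show ?thesis
    using that[OF geodesic_append[OF g1 g2 s]] g1 unfolding geodesic_def by auto
qed

lemma seg_eq_if_dist_eq: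
  assumes "a \<in> M" "b \<in> M" "p \<in> seg a b" "q \<in> seg a b" "d a p = d a q"
  shows "p = q"
proof -
  obtain \<gamma> where \<gamma>: "geodesic \<gamma> a b" "\<gamma> (d a p) = p"
    using geodesic_through assms by metis
  obtain \<gamma>' where \<gamma>': "geodesic \<gamma>' a b" "\<gamma>' (d a q) = q"
    using geodesic_through assms by metis
  have "geodesic_segment M d a b (\<gamma> ` {0..d a b})" "geodesic_segment M d a b (\<gamma>' ` {0..d a b})"
    using \<gamma> \<gamma>' geodesic_segment_iff by blast+
  then have same: "\<gamma> ` {0..d a b} = \<gamma>' ` {0..d a b}"
    using R_tree assms(1,2) unfolding R_tree_def uniquely_geodesic_def by blast
  have "d a q \<in> {0..d a b}"
    using seg_dist_le[OF assms(4)] by simp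
  then obtain t where t: "t \<in> {0..d a b}" "q = \<gamma> t"
    using same \<gamma>'(2) by (metis imageE image_eqI)
  then show ?thesis
    using geodesic_dist(1)[OF \<gamma>(1)] \<gamma>(2) assms(5) by auto
qed

lemma seg_point_at_dist:
  assumes "a \<in> M" "b \<in> M" "0 \<le> t" "t \<le> d a b"
  obtains q where "q \<in> seg a b" "d a q = t"
proof -
  obtain \<gamma> where "geodesic \<gamma> a b"
    using geodesic_exists assms(1,2) by blast
  then show ?thesis
    using that geodesic_in_seg geodesic_dist(1) assms(3,4) by blast
qed

lemma geodesic_segment_seg:
  assumes "a \<in> M" "b \<in> M"
  shows "geodesic_segment M d a b (seg a b)"
proof -
  obtain \<gamma> where \<gamma>: "geodesic \<gamma> a b"
    using geodesic_exists assms by blast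
  have "seg a b \<subseteq> \<gamma> ` {0..d a b}"
  proof
    fix p assume p: "p \<in> seg a b"
    then have t: "0 \<le> d a p" "d a p \<le> d a b"
      using seg_dist_le by auto
    then have "\<gamma> (d a p) = p"
      using seg_eq_if_dist_eq[OF assms geodesic_in_seg[OF \<gamma>] p] geodesic_dist(1)[OF \<gamma>] by auto
    then show "p \<in> \<gamma> ` {0..d a b}"
      using t by (intro image_eqI[of p \<gamma> "d a p"]) auto
  qed
  then have "seg a b = \<gamma> ` {0..d a b}"
    using geodesic_in_seg[OF \<gamma>] by auto
  then show ?thesis
    using \<gamma> geodesic_segment_iff by blast
qed

lemma geodesic_segment_subset_seg: "geodesic_segment M d a b S \<Longrightarrow> S \<subseteq> seg a b"
  using geodesic_segment_iff geodesic_in_seg by fastforce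

lemma seg_trans_right:
  assumes "a \<in> M" "b \<in> M" "w \<in> seg a b" "q \<in> seg w b"
  shows "q \<in> seg a b" "d a q = d a w + d w q"
proof -
  have "w \<in> M" "q \<in> M"
    using assms seg_subset by auto
  then have "d a q \<le> d a w + d w q" "d a b \<le> d a q + d q b"
    using triangle assms(1,2) by auto
  moreover have "d a w + d w b = d a b" "d w q + d q b = d w b"
    using assms unfolding seg_def by auto
  ultimately show "q \<in> seg a b" "d a q = d a w + d w q"
    using \<open>q \<in> M\<close> unfolding seg_def by auto
qed

lemma seg_trans_left:
  assumes "a \<in> M" "b \<in> M" "w \<in> seg a b" "q \<in> seg a w"
  shows "q \<in> seg a b" "d q b = d q w + d w b"
proof -
  have "w \<in> seg b a" "q \<in> seg w a"
    using assms(3,4) seg_commute by auto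
  from seg_trans_right[OF assms(2,1) this] show "q \<in> seg a b" "d q b = d q w + d w b"
    using seg_commute[of a b] commute[of b q] commute[of b w] commute[of w q] by auto
qed

lemma seg_split:
  assumes "a \<in> M" "b \<in> M" "w \<in> seg a b" "q \<in> seg a b"
  shows "q \<in> seg a w \<or> q \<in> seg w b"
proof -
  have w: "w \<in> M"
    using assms seg_subset by auto
  have sums: "d a w + d w b = d a b" "d a q + d q b = d a b"
    using assms unfolding seg_def by auto
  show ?thesis
  proof (cases "d a q \<le> d a w")
    case True
    obtain q' where q': "q' \<in> seg a w" "d a q' = d a q"
      using seg_point_at_dist[OF assms(1) w, of "d a q"] True by auto
    then have "q' = q"
      using seg_eq_if_dist_eq[OF assms(1,2) seg_trans_left(1)[OF assms(1,2,3)] assms(4)] by auto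
    then show ?thesis using q' by auto
  next
    case False
    then have "d b q \<le> d b w"
      using sums commute[of b q] commute[of b w] by linarith
    then obtain q' where q': "q' \<in> seg b w" "d b q' = d b q"
      using seg_point_at_dist[OF assms(2) w, of "d b q"] by auto
    have "w \<in> seg b a" "q \<in> seg b a"
      using assms(3,4) seg_commute by auto
    then have "q' = q"
      using seg_eq_if_dist_eq[OF assms(2,1) seg_trans_left(1)[OF assms(2,1)] _ q'(2)] q'(1) by auto
    then show ?thesis using q' seg_commute by auto
  qed
qed

lemma seg_join:
  assumes "x \<in> M" "y \<in> M" "z \<in> M" "seg x y \<inter> seg y z = {y}"
  shows "y \<in> seg x z"
proof -
  have "geodesic_segment M d x z (seg x y \<union> seg y z)"
    using R_tree geodesic_segment_seg assms unfolding R_tree_def by blast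
  then show ?thesis
    using geodesic_segment_subset_seg assms by blast
qed

lemma geodesic_last_in_seg:
  assumes \<gamma>: "geodesic \<gamma> y x" and z: "z \<in> M"
  obtains s where "0 \<le> s" "s \<le> d y x" "\<gamma> s \<in> seg y z"
    "\<And>t. 0 \<le> t \<Longrightarrow> t \<le> d y x \<Longrightarrow> \<gamma> t \<in> seg y z \<Longrightarrow> t \<le> s"
proof -
  define P where "P = {t\<in>{0..d y x}. \<gamma> t \<in> seg y z}"
  define s where "s = Sup P"
  have y: "y \<in> M"
    using geodesic_endpoints[OF \<gamma>] by blast
  have "0 \<in> P"
    using \<gamma> endpoints_in_seg[OF y z] unfolding P_def geodesic_def by auto
  have bdd: "bdd_above P"
    unfolding P_def bdd_above_def by auto
  have up: "t \<le> s" if "t \<in> P" for t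
    unfolding s_def using cSup_upper[OF that bdd] .
  have s: "0 \<le> s" "s \<le> d y x"
    using up[OF \<open>0 \<in> P\<close>] \<open>0 \<in> P\<close> unfolding s_def P_def by (auto intro: cSup_least)
  have "d y (\<gamma> s) + d (\<gamma> s) z \<le> d y z"
  proof (rule field_le_epsilon)
    fix e :: real assume "0 < e"
    then obtain t where t: "t \<in> P" "s - e / 2 < t"
      using less_cSup_iff[OF _ bdd, of "s - e / 2"] \<open>0 \<in> P\<close> unfolding s_def by auto
    then have t0: "0 \<le> t" "t \<le> d y x" and "\<gamma> t \<in> seg y z"
      unfolding P_def by auto
    then have "d y (\<gamma> t) + d (\<gamma> t) z = d y z"
      unfolding seg_def by auto
    moreover have "d (\<gamma> s) (\<gamma> t) = s - t"
      using \<gamma> s t0 up[OF t(1)] unfolding geodesic_def by auto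
    moreover have "d (\<gamma> s) z \<le> d (\<gamma> s) (\<gamma> t) + d (\<gamma> t) z"
      using triangle geodesic_dist(3)[OF \<gamma> s] z geodesic_dist(3)[OF \<gamma> t0] by auto
    ultimately show "d y (\<gamma> s) + d (\<gamma> s) z \<le> d y z + e"
      using geodesic_dist(1)[OF \<gamma> t0] geodesic_dist(1)[OF \<gamma> s] t(2) by linarith
  qed
  then have "\<gamma> s \<in> seg y z"
    using triangle[OF y geodesic_dist(3)[OF \<gamma> s] z] geodesic_dist(3)[OF \<gamma> s]
    unfolding seg_def by auto
  then show ?thesis
    using that s up unfolding P_def by auto
qed

text \<open>The centre of the tripod is the point where the geodesic from \<open>y\<close> to \<open>x\<close> leaves \<open>[y,z]\<close>.\<close>

lemma tripod_center:
  assumes x: "x \<in> M" and y: "y \<in> M" and z: "z \<in> M"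
  obtains w where "w \<in> seg y x" "w \<in> seg y z" "w \<in> seg x z"
proof -
  obtain \<gamma> where \<gamma>: "geodesic \<gamma> y x"
    using geodesic_exists x y by blast
  obtain s where s: "0 \<le> s" "s \<le> d y x" and wyz: "\<gamma> s \<in> seg y z"
    and last: "\<And>t. 0 \<le> t \<Longrightarrow> t \<le> d y x \<Longrightarrow> \<gamma> t \<in> seg y z \<Longrightarrow> t \<le> s"
    using geodesic_last_in_seg[OF \<gamma> z] by blast
  define w where "w = \<gamma> s"
  have wM: "w \<in> M" and dyw: "d y w = s" and wyx: "w \<in> seg y x"
    using geodesic_dist[OF \<gamma> s] geodesic_in_seg[OF \<gamma> s] w_def by auto
  have "seg x w \<inter> seg w z \<subseteq> {w}"
  proof
    fix q assume "q \<in> seg x w \<inter> seg w z"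
    then have q: "q \<in> seg w x" "q \<in> seg w z"
      using seg_commute by auto
    note qyx = seg_trans_right[OF y x wyx q(1)]
    have "q \<in> M" "0 \<le> d y q" "d y q \<le> d y x"
      using seg_subset[OF q(1)] seg_dist_le[OF qyx(1)] by auto
    moreover from this have "\<gamma> (d y q) = q"
      using seg_eq_if_dist_eq[OF y x geodesic_in_seg[OF \<gamma>] qyx(1)] geodesic_dist(1)[OF \<gamma>] by auto
    ultimately have "d y q \<le> s"
      using last seg_trans_right(1)[OF y z wyz[folded w_def] q(2)] by auto
    then have "d w q = 0"
      using qyx(2) dyw nonneg[of w q] by linarith
    then show "q \<in> {w}"
      using wM \<open>q \<in> M\<close> by auto
  qed
  then have "w \<in> seg x z"
    using seg_join[OF x wM z] endpoints_in_seg x wM z by blast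
  then show ?thesis
    using that wyx wyz w_def by blast
qed

lemma seg_in_cball:
  assumes c: "c \<in> M" and p: "p \<in> M" and q: "q \<in> M"
    and "d c p \<le> r" "d c q \<le> r" "m \<in> seg p q"
  shows "d c m \<le> r"
proof -
  obtain w where w: "w \<in> seg c p" "w \<in> seg c q" "w \<in> seg p q"
    using tripod_center[OF p c q] .
  from seg_split[OF p q w(3) assms(6)] show ?thesis
  proof
    assume "m \<in> seg p w"
    then have "m \<in> seg c p"
      using seg_trans_right(1)[OF c p w(1)] seg_commute by blast
    then show ?thesis
      using seg_dist_le(1) assms(4) by fastforce
  next
    assume "m \<in> seg w q"
    then have "m \<in> seg c q"
      using seg_trans_right(1)[OF c q w(2)] by blast
    then show ?thesis
      using seg_dist_le(1) assms(5) by fastforce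
  qed
qed

definition gconvex :: "'a set \<Rightarrow> bool" where
  "gconvex C \<longleftrightarrow> C \<subseteq> M \<and> (\<forall>p\<in>C. \<forall>q\<in>C. seg p q \<subseteq> C)"

definition nearest :: "'a set \<Rightarrow> 'a \<Rightarrow> 'a \<Rightarrow> bool" where
  "nearest C z p \<longleftrightarrow> p \<in> C \<and> (\<forall>c\<in>C. d z p \<le> d z c)"

lemma nearest_in_seg:
  assumes z: "z \<in> M" and C: "gconvex C" and p: "nearest C z p" and c: "c \<in> C"
  shows "p \<in> seg z c"
proof -
  have pc: "p \<in> C" "p \<in> M" "c \<in> M"
    using C p c unfolding gconvex_def nearest_def by auto
  obtain w where w: "w \<in> seg p z" "w \<in> seg p c" "w \<in> seg z c"
    using tripod_center[OF z pc(2,3)] .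
  have "w \<in> C"
    using C pc(1) c w(2) unfolding gconvex_def by auto
  then have "d z p \<le> d z w"
    using p unfolding nearest_def by auto
  moreover have "d p w + d w z = d p z"
    using w(1) unfolding seg_def by auto
  ultimately have "d p w = 0"
    using commute[of z p] commute[of z w] nonneg[of p w] by linarith
  then show ?thesis
    using pc seg_subset[OF w(1)] w(3) by auto
qed

text \<open>Since \<open>p'\<close> lies on \<open>[z,q']\<close>, it lies either on \<open>[z,p]\<close> or on \<open>[p,q']\<close>.\<close>

lemma nearest_dist_le_max:
  assumes z: "z \<in> M" and C': "gconvex C'" and p: "p \<in> M" and p': "nearest C' z p'"
    and q': "q' \<in> C'" "d p q' \<le> \<delta>"
  shows "d p p' \<le> max (d z p - d z p') \<delta>"
proof -
  have q'M: "q' \<in> M"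
    using C' q' unfolding gconvex_def by auto
  obtain w where w: "w \<in> seg z p" "w \<in> seg z q'" "w \<in> seg p q'"
    using tripod_center[OF p z q'M] by blast
  from seg_split[OF z q'M w(2) nearest_in_seg[OF z C' p' q'(1)]] show ?thesis
  proof
    assume "p' \<in> seg z w"
    then have "d z p' + d p' p = d z p"
      using seg_trans_left(1)[OF z p w(1)] unfolding seg_def by auto
    then show ?thesis using commute[of p p'] by auto
  next
    assume "p' \<in> seg w q'"
    then have "d p p' \<le> d p q'"
      using seg_trans_right(1)[OF p q'M w(3)] seg_dist_le(1) by blast
    then show ?thesis using q'(2) by auto
  qed
qed

lemma nearest_dist_le_Hausdorff:
  assumes z: "z \<in> M" and C: "gconvex C" and C': "gconvex C'"
    and p: "nearest C z p" and p': "nearest C' z p'"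
    and CC': "\<forall>c\<in>C. \<exists>c'\<in>C'. d c c' \<le> \<delta>" and C'C: "\<forall>c'\<in>C'. \<exists>c\<in>C. d c' c \<le> \<delta>"
  shows "d p p' \<le> \<delta>"
proof -
  have M: "p \<in> M" "p' \<in> M"
    using C C' p p' unfolding gconvex_def nearest_def by auto
  obtain q' where q': "q' \<in> C'" "d p q' \<le> \<delta>"
    using CC' p unfolding nearest_def by auto
  obtain q where q: "q \<in> C" "d p' q \<le> \<delta>"
    using C'C p' unfolding nearest_def by auto
  have "d p p' \<le> max (d z p - d z p') \<delta>" "d p' p \<le> max (d z p' - d z p) \<delta>"
    using nearest_dist_le_max[OF z C' M(1) p' q'] nearest_dist_le_max[OF z C M(2) p q] .
  moreover have "0 \<le> \<delta>"
    using q'(2) nonneg[of p q'] by linarith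
  ultimately show ?thesis
    using commute[of p' p] by (auto simp: max_def split: if_splits)
qed

text \<open>For \<open>0 \<le> r\<close>, \<open>shadow y c r\<close> is the point of the closed ball \<open>B(c,r)\<close> nearest to \<open>y\<close>.\<close>

definition shadow :: "'a \<Rightarrow> 'a \<Rightarrow> real \<Rightarrow> 'a" where
  "shadow y c r = (SOME p. p \<in> seg y c \<and> d y p = max 0 (d y c - r))"

lemma shadow_in_seg_dist:
  assumes "y \<in> M" "c \<in> M" "0 \<le> r"
  shows "shadow y c r \<in> seg y c" "d y (shadow y c r) = max 0 (d y c - r)"
proof -
  have "\<exists>p. p \<in> seg y c \<and> d y p = max 0 (d y c - r)"
    using seg_point_at_dist[OF assms(1,2), of "max 0 (d y c - r)"] assms(3) by auto
  then show "shadow y c r \<in> seg y c" "d y (shadow y c r) = max 0 (d y c - r)"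
    unfolding shadow_def by (metis (mono_tags, lifting) someI_ex)+
qed

lemma shadow_dist_center:
  assumes "y \<in> M" "c \<in> M" "0 \<le> r"
  shows "d (shadow y c r) c \<le> r"
proof -
  have "d y (shadow y c r) + d (shadow y c r) c = d y c"
    using shadow_in_seg_dist(1)[OF assms] unfolding seg_def by blast
  moreover have "d y c - r \<le> d y (shadow y c r)"
    using shadow_in_seg_dist(2)[OF assms] by simp
  ultimately show ?thesis
    by linarith
qed

lemma shadow_in_cball:
  assumes y: "y \<in> M" and c: "c \<in> M" "c' \<in> M" and r: "0 \<le> r" "0 \<le> r'"
    and cc': "d c c' \<le> r + r'"
    and le: "max 0 (d y c' - r') \<le> max 0 (d y c - r)"
  shows "d (shadow y c r) c' \<le> r'"
proof -
  let ?p = "shadow y c r"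
  note p = shadow_in_seg_dist[OF y c(1) r(1)]
  show ?thesis
  proof (cases "d y c \<le> r")
    case True
    then have "?p = y"
      using p y seg_subset by auto
    then show ?thesis using True le by auto
  next
    case False
    obtain w where w: "w \<in> seg y c" "w \<in> seg y c'" "w \<in> seg c c'"
      using tripod_center[OF c(1) y c(2)] .
    from seg_split[OF y c(1) w(1) p(1)] show ?thesis
    proof
      assume "?p \<in> seg y w"
      then have "d y ?p + d ?p c' = d y c'"
        using seg_trans_left(1)[OF y c(2) w(2)] unfolding seg_def by auto
      then show ?thesis using p(2) le by auto
    next
      assume "?p \<in> seg w c"
      moreover have "w \<in> seg c' c"
        using w(3) seg_commute[of c c'] by simp
      ultimately have "?p \<in> seg c' c"
        using seg_trans_right(1)[OF c(2,1)] by blast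
      then have "d c' ?p + d ?p c = d c' c"
        unfolding seg_def by blast
      moreover have "d y ?p + d ?p c = d y c"
        using p(1) unfolding seg_def by auto
      ultimately show ?thesis
        using p(2) False cc' commute[of c' ?p] commute[of c' c] by auto
    qed
  qed
qed

lemma shadow_in_seg_shadow:
  assumes y: "y \<in> M" and c: "c \<in> M" "c' \<in> M" and r: "0 \<le> r" "0 \<le> r'"
    and cc': "d c c' \<le> r + r'"
    and le: "max 0 (d y c' - r') \<le> max 0 (d y c - r)"
  shows "shadow y c' r' \<in> seg y (shadow y c r)"
proof -
  let ?p = "shadow y c r" and ?p' = "shadow y c' r'"
  have pM: "?p \<in> M"
    using shadow_in_seg_dist(1)[OF y c(1) r(1)] seg_subset by auto
  obtain w where w: "w \<in> seg y c'" "w \<in> seg y ?p" "w \<in> seg c' ?p"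
    using tripod_center[OF c(2) y pM] .
  have "d c' w \<le> r'"
    using seg_dist_le(1)[OF w(3)] shadow_in_cball[OF assms] commute[of c'] by auto
  moreover have "d y w + d w c' = d y c'"
    using w(1) unfolding seg_def by auto
  ultimately have "max 0 (d y c' - r') \<le> d y w"
    using commute[of c' w] nonneg[of y w] by auto
  then obtain q where q: "q \<in> seg y w" "d y q = max 0 (d y c' - r')"
    using seg_point_at_dist[OF y seg_subset[OF w(1)]] by (metis max.cobounded1)
  have "q \<in> seg y c'"
    using seg_trans_left(1)[OF y c(2) w(1) q(1)] .
  then have "q = ?p'"
    using seg_eq_if_dist_eq[OF y c(2) _ shadow_in_seg_dist(1)[OF y c(2) r(2)]]
      shadow_in_seg_dist(2)[OF y c(2) r(2)] q(2) by auto
  then show ?thesis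
    using seg_trans_left(1)[OF y pM w(2) q(1)] by simp
qed

lemma shadow_dist:
  assumes y: "y \<in> M" and c: "c \<in> M" "c' \<in> M" and r: "0 \<le> r" "0 \<le> r'"
    and cc': "d c c' \<le> r + r'"
  shows "d (shadow y c r) (shadow y c' r') = \<bar>max 0 (d y c - r) - max 0 (d y c' - r')\<bar>"
proof -
  have ordered: "d (shadow y c r) (shadow y c' r') = \<bar>max 0 (d y c - r) - max 0 (d y c' - r')\<bar>"
    if "c \<in> M" "c' \<in> M" "0 \<le> r" "0 \<le> r'" "d c c' \<le> r + r'"
      "max 0 (d y c' - r') \<le> max 0 (d y c - r)" for c c' r r'
  proof -
    have "shadow y c' r' \<in> seg y (shadow y c r)"
      using shadow_in_seg_shadow[OF y that] .
    then have "d y (shadow y c' r') + d (shadow y c' r') (shadow y c r) = d y (shadow y c r)"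
      unfolding seg_def by blast
    then show ?thesis
      using shadow_in_seg_dist(2)[OF y that(1,3)] shadow_in_seg_dist(2)[OF y that(2,4)] that(6)
        commute[of "shadow y c r" "shadow y c' r'"] by linarith
  qed
  show ?thesis
  proof (cases "max 0 (d y c' - r') \<le> max 0 (d y c - r)")
    case True
    then show ?thesis
      using ordered[OF c r cc'] by blast
  next
    case False
    have "d c' c \<le> r' + r"
      using cc' commute[of c c'] by simp
    moreover have "max 0 (d y c - r) \<le> max 0 (d y c' - r')"
      using False by linarith
    ultimately show ?thesis
      using ordered[OF c(2,1) r(2,1)] commute[of "shadow y c r"] abs_minus_commute by metis
  qed
qed

lemma shadow_dist_cball:
  assumes y: "y \<in> M" and c: "c \<in> M" "c' \<in> M" and r: "0 \<le> r" "0 \<le> r'"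
    and cc': "d c c' \<le> r + r'"
  shows "d (shadow y c r) c' \<le> r' + max 0 (max 0 (d y c' - r') - max 0 (d y c - r))"
proof (cases "max 0 (d y c' - r') \<le> max 0 (d y c - r)")
  case True
  then show ?thesis
    using shadow_in_cball[OF assms] by simp
next
  case False
  let ?p = "shadow y c r" and ?p' = "shadow y c' r'"
  have "?p \<in> M" "?p' \<in> M"
    using shadow_in_seg_dist(1)[OF y c(1) r(1)] shadow_in_seg_dist(1)[OF y c(2) r(2)] seg_subset
    by auto
  then have "d ?p c' \<le> d ?p ?p' + d ?p' c'"
    using triangle c(2) by blast
  moreover have "d ?p' c' \<le> r'"
    using shadow_dist_center[OF y c(2) r(2)] .
  ultimately show ?thesis
    using shadow_dist[OF assms] False by linarith
qed

text \<open>Hyperconvexity, with balls given as pairs (centre, radius). Seen from the centre \<open>y\<close> of one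
  ball, the shadows on all balls are linearly ordered along geodesics from \<open>y\<close>
  (\<open>shadow_dist\<close>); the limit of increasingly distant shadows lies in every ball.\<close>

lemma common_point_of_cballs:
  assumes complete: "mcomplete" and "F \<noteq> {}" and FM: "fst ` F \<subseteq> M"
    and meet: "\<And>j k. j \<in> F \<Longrightarrow> k \<in> F \<Longrightarrow> d (fst j) (fst k) \<le> snd j + snd k"
  obtains p where "p \<in> M" "\<And>k. k \<in> F \<Longrightarrow> d p (fst k) \<le> snd k"
proof -
  obtain k0 where k0: "k0 \<in> F"
    using \<open>F \<noteq> {}\<close> by auto
  define y where "y = fst k0"
  have y: "y \<in> M" and cM: "\<And>k. k \<in> F \<Longrightarrow> fst k \<in> M"
    using k0 FM y_def by auto
  have r: "0 \<le> snd k" if "k \<in> F" for k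
    using meet[OF that that] zero[OF cM[OF that] cM[OF that]] by simp
  define s where "s k = max 0 (d y (fst k) - snd k)" for k
  define pt where "pt k = shadow y (fst k) (snd k)" for k
  have pt_dist: "d (pt j) (pt k) = \<bar>s j - s k\<bar>"
    and pt_cball: "d (pt j) (fst k) \<le> snd k + max 0 (s k - s j)" if "j \<in> F" "k \<in> F" for j k
    using shadow_dist[OF y cM cM r r meet, OF that(1,2,1,2,1,2)]
      shadow_dist_cball[OF y cM cM r r meet, OF that(1,2,1,2,1,2)]
    unfolding s_def pt_def by simp_all
  have bdd: "bdd_above (s ` F)"
  proof (rule bdd_aboveI)
    fix t assume "t \<in> s ` F"
    then obtain k where k: "k \<in> F" "t = s k"
      by blast
    have "d y (fst k) \<le> snd k0 + snd k"
      using meet[OF k0 k(1)] unfolding y_def .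
    then show "t \<le> snd k0"
      using r[OF k0] unfolding k(2) s_def by simp
  qed
  have ptM: "pt ` F \<subseteq> M"
    using shadow_in_seg_dist(1)[OF y cM r] seg_subset unfolding pt_def by blast
  have "d (pt j) (pt k) \<le> \<bar>s j - s k\<bar>" if "j \<in> F" "k \<in> F" for j k
    using pt_dist[OF that] by simp
  then obtain p where p: "p \<in> M" "\<And>j. j \<in> F \<Longrightarrow> d p (pt j) \<le> Sup (s ` F) - s j"
    using mcomplete_chain_limit[OF complete \<open>F \<noteq> {}\<close> ptM bdd] by blast
  have "d p (fst k) \<le> snd k" if k: "k \<in> F" for k
  proof (rule field_le_epsilon)
    fix e :: real assume "0 < e"
    then obtain j where j: "j \<in> F" "Sup (s ` F) - e / 2 < s j"
      using less_cSup_iff[of "s ` F" "Sup (s ` F) - e / 2"] \<open>F \<noteq> {}\<close> bdd by auto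
    have "s k \<le> Sup (s ` F)" "s j \<le> Sup (s ` F)"
      using cSup_upper[OF imageI bdd] k j(1) by auto
    then have "max 0 (s k - s j) \<le> Sup (s ` F) - s j"
      by simp
    moreover have "d p (fst k) \<le> d p (pt j) + d (pt j) (fst k)"
      using triangle p(1) ptM j(1) cM[OF k] by blast
    ultimately show "d p (fst k) \<le> snd k + e"
      using p(2)[OF j(1)] pt_cball[OF j(1) k] j(2) by linarith
  qed
  then show ?thesis
    using that p(1) by blast
qed

end

locale R_tree_extension = R_tree_space M d + X: Metric_space MX dX
  for M :: "'a set" and d and MX :: "'x set" and dX +
  fixes A :: "'x set" and z0 :: 'a
  assumes complete: "mcomplete" and A: "A \<subseteq> MX" "A \<noteq> {}" and z0: "z0 \<in> M"
begin

lemma bnonexp_in_M: "f \<in> bnonexp A dX M d \<Longrightarrow> a \<in> A \<Longrightarrow> f a \<in> M"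
  unfolding bnonexp_def by auto

lemma bnonexp_dist_le: "f \<in> bnonexp A dX M d \<Longrightarrow> a \<in> A \<Longrightarrow> b \<in> A \<Longrightarrow> d (f a) (f b) \<le> dX a b"
  unfolding bnonexp_def by auto

lemma bnonexp_bounded:
  assumes "f \<in> bnonexp A dX M d"
  obtains R where "\<And>a. a \<in> A \<Longrightarrow> d z0 (f a) \<le> R"
proof -
  have "mbounded (f ` A)"
    using assms unfolding bnonexp_def by auto
  then obtain c B where "f ` A \<subseteq> mcball c B"
    unfolding mbounded_def by auto
  then have "d z0 (f a) \<le> d z0 c + B" if "a \<in> A" for a
    using triangle[OF z0, of c "f a"] that unfolding mcball_def by fastforce
  then show ?thesis
    using that by blast
qed

definition extension_values :: "('x \<Rightarrow> 'a) \<Rightarrow> 'x \<Rightarrow> 'a set" where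
  "extension_values f x = {y \<in> M. \<forall>a\<in>A. d y (f a) \<le> dX x a}"

lemma extension_values_gconvex:
  assumes f: "f \<in> bnonexp A dX M d"
  shows "gconvex (extension_values f x)"
  unfolding gconvex_def
proof (intro conjI ballI subsetI)
  show "y \<in> M" if "y \<in> extension_values f x" for y
    using that unfolding extension_values_def by auto
  fix p q m assume p: "p \<in> extension_values f x" and q: "q \<in> extension_values f x"
    and m: "m \<in> seg p q"
  have "d (f a) m \<le> dX x a" if a: "a \<in> A" for a
    using seg_in_cball[OF bnonexp_in_M[OF f a] _ _ _ _ m] p q a commute
    unfolding extension_values_def by auto
  then show "m \<in> extension_values f x"
    using seg_subset[OF m] commute unfolding extension_values_def by auto
qed

text \<open>Hyperconvexity applied to the balls \<open>B(f a, dX x a)\<close> and one more ball \<open>B(y, R)\<close>.\<close>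

lemma extension_values_near:
  assumes f: "f \<in> bnonexp A dX M d" and x: "x \<in> MX" and y: "y \<in> M" and "0 \<le> R"
    and yf: "\<And>a. a \<in> A \<Longrightarrow> d y (f a) \<le> R + dX x a"
  obtains c where "c \<in> extension_values f x" "d y c \<le> R"
proof -
  define F where "F = insert (y, R) ((\<lambda>a. (f a, dX x a)) ` A)"
  have "fst ` F \<subseteq> M"
    using y bnonexp_in_M[OF f] unfolding F_def by auto
  moreover have "d (fst j) (fst k) \<le> snd j + snd k" if "j \<in> F" "k \<in> F" for j k
  proof -
    have "d (f a) (f b) \<le> dX x a + dX x b" if "a \<in> A" "b \<in> A" for a b
      using bnonexp_dist_le[OF f that] X.triangle[of a x b] X.commute[of a x] that A(1) x
      by fastforce
    moreover have "d (f a) y \<le> dX x a + R" if "a \<in> A" for a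
      using yf[OF that] commute[of "f a" y] by simp
    ultimately show ?thesis
      using that yf y \<open>0 \<le> R\<close> unfolding F_def by auto
  qed
  ultimately obtain p where p: "p \<in> M" "\<And>k. k \<in> F \<Longrightarrow> d p (fst k) \<le> snd k"
    using common_point_of_cballs[OF complete, of F] unfolding F_def by blast
  have "p \<in> extension_values f x"
    using p unfolding F_def extension_values_def by auto
  moreover have "d y p \<le> R"
    using p(2)[of "(y, R)"] commute[of y p] unfolding F_def by auto
  ultimately show ?thesis
    using that by blast
qed

lemma extension_values_Hausdorff:
  assumes f: "f \<in> bnonexp A dX M d" and g: "g \<in> bnonexp A dX M d"
    and D: "\<And>a. a \<in> A \<Longrightarrow> d (f a) (g a) \<le> D" and x: "x \<in> MX" and x': "x' \<in> MX"
    and y: "y \<in> extension_values f x"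
  shows "\<exists>z\<in>extension_values g x'. d y z \<le> dX x x' + D"
proof -
  have yM: "y \<in> M"
    using y unfolding extension_values_def by auto
  obtain a0 where "a0 \<in> A"
    using A(2) by auto
  then have "0 \<le> dX x x' + D"
    using D nonneg[of "f a0" "g a0"] X.nonneg[of x x'] by (meson add_nonneg_nonneg order_trans)
  moreover have "d y (g a) \<le> dX x x' + D + dX x' a" if a: "a \<in> A" for a
  proof -
    have "d y (g a) \<le> d y (f a) + d (f a) (g a)"
      using triangle yM bnonexp_in_M[OF f a] bnonexp_in_M[OF g a] by blast
    moreover have "d y (f a) \<le> dX x a"
      using y a unfolding extension_values_def by auto
    moreover have "dX x a \<le> dX x x' + dX x' a"
      using X.triangle x x' a A(1) by blast
    ultimately show ?thesis
      using D[OF a] by linarith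
  qed
  ultimately show ?thesis
    using extension_values_near[OF g x' yM] by metis
qed

lemma extension_values_nearest:
  assumes f: "f \<in> bnonexp A dX M d" and x: "x \<in> MX"
  shows "\<exists>p. nearest (extension_values f x) z0 p"
proof -
  obtain R where R: "\<And>a. a \<in> A \<Longrightarrow> d z0 (f a) \<le> R"
    using bnonexp_bounded[OF f] by blast
  obtain a0 where "a0 \<in> A"
    using A(2) by auto
  then have "0 \<le> R"
    using R nonneg order_trans by blast
  then obtain c where c: "c \<in> extension_values f x"
    using extension_values_near[OF f x z0, of R] R X.nonneg by (smt (verit))
  define r where "r = Inf ((\<lambda>c. d z0 c) ` extension_values f x)"
  have bdd: "bdd_below ((\<lambda>c. d z0 c) ` extension_values f x)"
    by (rule bdd_belowI[of _ 0]) auto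
  have r_le: "r \<le> d z0 c" if "c \<in> extension_values f x" for c
    unfolding r_def using cINF_lower[OF bdd that] .
  have "0 \<le> r"
    unfolding r_def using c by (intro cINF_greatest) auto
  moreover have "d z0 (f a) \<le> r + dX x a" if a: "a \<in> A" for a
  proof -
    have "d z0 (f a) - dX x a \<le> r"
      unfolding r_def
    proof (rule cINF_greatest)
      show "extension_values f x \<noteq> {}"
        using c by auto
      fix c assume "c \<in> extension_values f x"
      then have "c \<in> M" "d c (f a) \<le> dX x a"
        using a unfolding extension_values_def by auto
      then show "d z0 (f a) - dX x a \<le> d z0 c"
        using triangle[OF z0 _ bnonexp_in_M[OF f a], of c] by linarith
    qed
    then show ?thesis
      by linarith
  qed
  ultimately obtain p where "p \<in> extension_values f x" "d z0 p \<le> r"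
    using extension_values_near[OF f x z0] by blast
  then show ?thesis
    using r_le unfolding nearest_def by force
qed

definition extension :: "('x \<Rightarrow> 'a) \<Rightarrow> 'x \<Rightarrow> 'a" where
  "extension f x = (SOME p. nearest (extension_values f x) z0 p)"

lemma extension_nearest:
  "f \<in> bnonexp A dX M d \<Longrightarrow> x \<in> MX \<Longrightarrow> nearest (extension_values f x) z0 (extension f x)"
  unfolding extension_def using extension_values_nearest by (rule someI_ex)

lemma extension_in_M: "f \<in> bnonexp A dX M d \<Longrightarrow> x \<in> MX \<Longrightarrow> extension f x \<in> M"
  using extension_nearest unfolding nearest_def extension_values_def by blast

lemma extension_dist_le:
  assumes f: "f \<in> bnonexp A dX M d" and g: "g \<in> bnonexp A dX M d"
    and D: "\<And>a. a \<in> A \<Longrightarrow> d (f a) (g a) \<le> D" and x: "x \<in> MX" and x': "x' \<in> MX"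
  shows "d (extension f x) (extension g x') \<le> dX x x' + D"
proof (rule nearest_dist_le_Hausdorff[OF z0])
  show "gconvex (extension_values f x)" "gconvex (extension_values g x')"
    using extension_values_gconvex f g by auto
  show "nearest (extension_values f x) z0 (extension f x)"
    "nearest (extension_values g x') z0 (extension g x')"
    using extension_nearest f g x x' by auto
  show "\<forall>c\<in>extension_values f x. \<exists>c'\<in>extension_values g x'. d c c' \<le> dX x x' + D"
    using extension_values_Hausdorff[OF f g D x x'] by blast
  have "d (g a) (f a) \<le> D" if "a \<in> A" for a
    using D[OF that] commute by simp
  then show "\<forall>c'\<in>extension_values g x'. \<exists>c\<in>extension_values f x. d c' c \<le> dX x x' + D"
    using extension_values_Hausdorff[OF g f _ x' x] X.commute[of x x'] by auto
qed

lemma extension_eq: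
  assumes f: "f \<in> bnonexp A dX M d" and a: "a \<in> A"
  shows "extension f a = f a"
proof -
  have "a \<in> MX"
    using a A(1) by auto
  then have "d (extension f a) (f a) \<le> dX a a"
    using extension_nearest[OF f] a unfolding nearest_def extension_values_def by blast
  moreover have "dX a a = 0"
    using \<open>a \<in> MX\<close> by simp
  ultimately have "d (extension f a) (f a) = 0"
    using nonneg[of "extension f a" "f a"] by linarith
  then show ?thesis
    using extension_in_M[OF f \<open>a \<in> MX\<close>] bnonexp_in_M[OF f a] by simp
qed

lemma extension_in_bnonexp:
  assumes f: "f \<in> bnonexp A dX M d"
  shows "restrict (extension f) MX \<in> bnonexp MX dX M d"
  unfolding bnonexp_def
proof (intro CollectI conjI ballI)
  show "restrict (extension f) MX \<in> MX \<rightarrow>\<^sub>E M"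
    using extension_in_M[OF f] by auto
  fix x y assume "x \<in> MX" "y \<in> MX"
  then show "d (restrict (extension f) MX x) (restrict (extension f) MX y) \<le> dX x y"
    using extension_dist_le[OF f f, of 0] bnonexp_in_M[OF f] by simp
next
  obtain R where R: "\<And>a. a \<in> A \<Longrightarrow> d z0 (f a) \<le> R"
    using bnonexp_bounded[OF f] by blast
  have bound: "d z0 (extension f x) \<le> R" if x: "x \<in> MX" for x
  proof -
    obtain a0 where "a0 \<in> A"
      using A(2) by auto
    then have "0 \<le> R"
      using R nonneg order_trans by blast
    then obtain c where "c \<in> extension_values f x" "d z0 c \<le> R"
      using extension_values_near[OF f x z0, of R] R X.nonneg by (smt (verit))
    then show ?thesis
      using extension_nearest[OF f x] unfolding nearest_def by force
  qed
  have "restrict (extension f) MX ` MX \<subseteq> mcball z0 R"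
  proof
    fix y assume "y \<in> restrict (extension f) MX ` MX"
    then obtain x where "x \<in> MX" "y = extension f x"
      by auto
    then show "y \<in> mcball z0 R"
      using bound extension_in_M[OF f] z0 by (simp add: in_mcball)
  qed
  then show "mbounded (restrict (extension f) MX ` MX)"
    unfolding mbounded_def by blast
qed

lemma restrict_extension:
  assumes f: "f \<in> bnonexp A dX M d"
  shows "restrict (restrict (extension f) MX) A = f"
proof
  fix x
  show "restrict (restrict (extension f) MX) A x = f x"
    using extension_eq[OF f] A(1) f unfolding bnonexp_def by (auto simp: PiE_def extensional_def)
qed

lemma bnonexp_dist_bdd:
  assumes f: "f \<in> bnonexp A dX M d" and g: "g \<in> bnonexp A dX M d"
  shows "bdd_above ((\<lambda>a. d (f a) (g a)) ` A)"
proof -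
  obtain R1 R2 where R: "\<And>a. a \<in> A \<Longrightarrow> d z0 (f a) \<le> R1" "\<And>a. a \<in> A \<Longrightarrow> d z0 (g a) \<le> R2"
    using bnonexp_bounded[OF f] bnonexp_bounded[OF g] by metis
  have "d (f a) (g a) \<le> R1 + R2" if a: "a \<in> A" for a
    using triangle[OF bnonexp_in_M[OF f a] z0 bnonexp_in_M[OF g a]] commute[of "f a" z0] R[OF a]
    by linarith
  then show ?thesis
    by (intro bdd_aboveI[of _ "R1 + R2"]) auto
qed

lemma dsup_extension_le:
  assumes f: "f \<in> bnonexp A dX M d" and g: "g \<in> bnonexp A dX M d"
  shows "dsup MX d (restrict (extension f) MX) (restrict (extension g) MX) \<le> dsup A d f g"
  unfolding dsup_def[of MX]
proof (rule cSUP_least)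
  show "MX \<noteq> {}"
    using A by auto
  have "d (f a) (g a) \<le> dsup A d f g" if "a \<in> A" for a
    unfolding dsup_def using cSUP_upper[OF that bnonexp_dist_bdd[OF f g]] .
  then show "d (restrict (extension f) MX x) (restrict (extension g) MX x) \<le> dsup A d f g"
    if "x \<in> MX" for x
    using extension_dist_le[OF f g _ that that] that by simp
qed

end

theorem corollary5p9:
  fixes MX :: "'a set" and dX :: "'a \<Rightarrow> 'a \<Rightarrow> real"
    and MY :: "'b set" and dY :: "'b \<Rightarrow> 'b \<Rightarrow> real"
    and A :: "'a set"
  assumes "Metric_space MX dX"
    and "A \<subseteq> MX" and "A \<noteq> {}"
    and "R_tree MY dY" and "Metric_space.mcomplete MY dY"
  shows "\<exists>\<alpha>. (\<forall>f\<in>bnonexp A dX MY dY.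
              \<alpha> f \<in> bnonexp MX dX MY dY \<and> restrict (\<alpha> f) A = f) \<and>
            (\<forall>f\<in>bnonexp A dX MY dY. \<forall>g\<in>bnonexp A dX MY dY.
              dsup MX dY (\<alpha> f) (\<alpha> g) \<le> dsup A dY f g)"
proof (cases "MY = {}")
  case True
  then have "bnonexp A dX MY dY = {}"
    using \<open>A \<noteq> {}\<close> unfolding bnonexp_def by auto
  then show ?thesis
    by auto
next
  case False
  then obtain z0 where "z0 \<in> MY"
    by auto
  have "Metric_space MY dY"
    using \<open>R_tree MY dY\<close> unfolding R_tree_def by auto
  interpret R_tree_extension MY dY MX dX A z0
    using assms \<open>z0 \<in> MY\<close> \<open>Metric_space MY dY\<close>
    by (simp add: R_tree_extension_def R_tree_extension_axioms_def R_tree_space_def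
        R_tree_space_axioms_def)
  show ?thesis
    by (intro exI[of _ "\<lambda>f. restrict (extension f) MX"] conjI ballI
        extension_in_bnonexp restrict_extension dsup_extension_le)
qed

end
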